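(* Let $\mathcal{X}\subseteq\mathbb{R}^n$ be compact, $\mathcal{X}_0\subseteq\mathcal{X}$, $U\subseteq\mathbb{R}^m$, and $f:\mathcal{X}\times U\to\mathcal{X}$. Let $\mathcal{X}_{VF}\subseteq\mathcal{X}$ be partitioned as $\mathcal{X}_{VF}=\bigcup_{i=1}^{p}\mathcal{X}_{VF_i}$ for some $p\in\mathbb{N}$. Suppose there exist a function $\mathcal{T}:\mathcal{X}\times\mathcal{X}\to\mathbb{R}$ and functions $\mathcal{V}_i:\mathcal{X}\times\mathcal{X}\to\mathbb{R}_{\geq0}$ (bounded from below), $1\le i\le p$, such that: (i) for every $x\in\mathcal{X}$ there exists $u\in U$ with $\mathcal{T}(x,f(x,u))\geq 0$; (ii) for all $x,y\in\mathcal{X}$ and all $u\in U$: if $\mathcal{T}(x,f(x,u))\geq 0$ and $\mathcal{T}(f(x,u),y)\geq 0$, then $\mathcal{T}(x,y)\geq 0$; (iii) for every $x_0\in\mathcal{X}_0$ and every $1\le i\le p$ there exists $\xi_i>0$ such that for all $z,z'\in\mathcal{X}_{VF_i}$: if $\mathcal{T}(x_0,z)\geq0$ and $\mathcal{T}(z,z')\geq 0$, then $\mathcal{V}_i(x_0,z')\leq\mathcal{V}_i(x_0,z)-\xi_i$. Then there exists a state-feedback controller $\kappa:\mathcal{X}\to 2^U\setminus\{\emptyset\}$ such that every state trajectory of the system under $\kappa$ visits $\mathcal{X}_{VF}$ only finitely often.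
   Context: A discrete-time control system $(\mathcal{X},\mathcal{X}_0,U,f)$ has compact state set $\mathcal{X}$, initial set $\mathcal{X}_0$, input set $U$ and transition function $f$. Given a state-feedback controller $\kappa:\mathcal{X}\to 2^U\setminus\{\emptyset\}$, a state trajectory under $\kappa$ is any sequence $\langle x_0,x_1,\ldots\rangle$ with $x_0\in\mathcal{X}_0$ and $x_{k+1}=f(x_k,u_k)$ for some $u_k\in\kappa(x_k)$, for all $k\in\mathbb{N}$. A trajectory visits a set only finitely often if only finitely many $x_k$ lie in that set. *)

theory Defs
  imports "HOL-Analysis.Analysis"
begin

definition is_trajectory ::
  "'x set \<Rightarrow> ('x \<Rightarrow> 'u \<Rightarrow> 'x) \<Rightarrow> ('x \<Rightarrow> 'u set) \<Rightarrow> (nat \<Rightarrow> 'x) \<Rightarrow> bool" where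
  "is_trajectory X0 f kappa xs \<longleftrightarrow>
     xs 0 \<in> X0 \<and> (\<forall>k. \<exists>u \<in> kappa (xs k). xs (Suc k) = f (xs k) u)"

definition visits_finitely_often :: "(nat \<Rightarrow> 'x) \<Rightarrow> 'x set \<Rightarrow> bool" where
  "visits_finitely_often xs S \<longleftrightarrow> finite {k. xs k \<in> S}"

end

theory Submission
  imports Defs
begin

text \<open>Use the controller that admits exactly the inputs u with T x (f x u) \<ge> 0; it is nonempty
by (i). Along any closed-loop trajectory, (ii) propagates T \<ge> 0 from single steps to every pair
of times a < b. Hence all visits of a region XVF i after time 0 are pairwise T-related and
T-related to the initial state, so by (iii) each visit lowers V i (x 0) by at least \<xi> > 0.
As V i is nonnegative, each region is visited only finitely often.\<close>

definition progress_controller ::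
  "'u set \<Rightarrow> ('x \<Rightarrow> 'u \<Rightarrow> 'x) \<Rightarrow> ('x \<Rightarrow> 'x \<Rightarrow> real) \<Rightarrow> 'x \<Rightarrow> 'u set" where
  "progress_controller U f T x = {u \<in> U. T x (f x u) \<ge> 0}"

lemma finite_if_uniformly_decreasing:
  fixes g :: "nat \<Rightarrow> real"
  assumes "\<xi> > 0"
    and nonneg: "\<And>k. k \<in> S \<Longrightarrow> g k \<ge> 0"
    and decrease: "\<And>a b. a \<in> S \<Longrightarrow> b \<in> S \<Longrightarrow> a < b \<Longrightarrow> g b \<le> g a - \<xi>"
  shows "finite S"
proof (rule ccontr)
  assume "infinite S"
  define e where "e = enumerate S"
  have e_in: "e n \<in> S" for n
    using enumerate_in_set[OF \<open>infinite S\<close>] unfolding e_def by blast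
  have e_less: "e n < e (Suc n)" for n
    using enumerate_mono[OF lessI \<open>infinite S\<close>] unfolding e_def by blast
  have linear_decay: "g (e n) \<le> g (e 0) - real n * \<xi>" for n
  proof (induction n)
    case (Suc n)
    then show ?case
      using decrease[OF e_in e_in e_less, of n] by (simp add: algebra_simps)
  qed simp
  obtain n where "g (e 0) < real n * \<xi>"
    using reals_Archimedean3[OF \<open>\<xi> > 0\<close>] by blast
  then show False
    using linear_decay[of n] nonneg[OF e_in, of n] by linarith
qed

lemma chain_rel_forward:
  assumes step: "\<And>k. R (s k) (s (Suc k))"
    and trans: "\<And>k l. R (s (Suc k)) (s l) \<Longrightarrow> R (s k) (s l)"
    and "a < b"
  shows "R (s a) (s b)"
  using \<open>a < b\<close>
proof (induction a rule: strict_inc_induct)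
  case (base a)
  then show ?case using step by simp
next
  case (step a)
  then show ?case using trans by blast
qed

lemma trajectory_in_invariant_set:
  assumes "is_trajectory X0 f \<kappa> xs" and "X0 \<subseteq> X"
    and invariant: "\<And>x u. x \<in> X \<Longrightarrow> u \<in> \<kappa> x \<Longrightarrow> f x u \<in> X"
  shows "xs k \<in> X"
proof (induction k)
  case 0
  then show ?case using assms(1,2) unfolding is_trajectory_def by auto
next
  case (Suc k)
  then show ?case using assms(1) invariant unfolding is_trajectory_def by metis
qed

lemma progress_controller_trajectory_related:
  assumes traj: "is_trajectory X0 f (progress_controller U f T) xs"
    and "X0 \<subseteq> X"
    and f_maps: "\<forall>x\<in>X. \<forall>u\<in>U. f x u \<in> X"
    and trans: "\<forall>x\<in>X. \<forall>y\<in>X. \<forall>u\<in>U.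
                  T x (f x u) \<ge> 0 \<and> T (f x u) y \<ge> 0 \<longrightarrow> T x y \<ge> 0"
    and "a < b"
  shows "T (xs a) (xs b) \<ge> 0"
proof -
  have in_X: "xs k \<in> X" for k
    using trajectory_in_invariant_set[OF traj \<open>X0 \<subseteq> X\<close>] f_maps
    unfolding progress_controller_def by blast
  have step_input: "\<exists>u\<in>U. T (xs k) (f (xs k) u) \<ge> 0 \<and> xs (Suc k) = f (xs k) u" for k
    using traj unfolding is_trajectory_def progress_controller_def by auto
  show ?thesis
  proof (rule chain_rel_forward[where R = "\<lambda>x y. T x y \<ge> 0", OF _ _ \<open>a < b\<close>])
    show "T (xs k) (xs (Suc k)) \<ge> 0" for k
      using step_input[of k] by auto
    show "T (xs k) (xs l) \<ge> 0" if "T (xs (Suc k)) (xs l) \<ge> 0" for k l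
      using step_input[of k] trans in_X that by metis
  qed
qed

theorem theorem2:
  fixes X X0 :: "(real ^ 'n) set"
    and U :: "(real ^ 'm) set"
    and f :: "real ^ 'n \<Rightarrow> real ^ 'm \<Rightarrow> real ^ 'n"
    and p :: nat
    and XVF :: "nat \<Rightarrow> (real ^ 'n) set"
    and T :: "real ^ 'n \<Rightarrow> real ^ 'n \<Rightarrow> real"
    and V :: "nat \<Rightarrow> real ^ 'n \<Rightarrow> real ^ 'n \<Rightarrow> real"
  assumes compact_X: "compact X"
    and X0_sub: "X0 \<subseteq> X"
    and f_maps: "\<forall>x\<in>X. \<forall>u\<in>U. f x u \<in> X"
    and XVF_sub: "\<forall>i\<in>{1..p}. XVF i \<subseteq> X"
    and XVF_disj: "\<forall>i\<in>{1..p}. \<forall>j\<in>{1..p}. i \<noteq> j \<longrightarrow> XVF i \<inter> XVF j = {}"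
    and V_nonneg: "\<forall>i\<in>{1..p}. \<forall>x\<in>X. \<forall>y\<in>X. V i x y \<ge> 0"
    and cond_i: "\<forall>x\<in>X. \<exists>u\<in>U. T x (f x u) \<ge> 0"
    and cond_ii: "\<forall>x\<in>X. \<forall>y\<in>X. \<forall>u\<in>U.
                    T x (f x u) \<ge> 0 \<and> T (f x u) y \<ge> 0 \<longrightarrow> T x y \<ge> 0"
    and cond_iii: "\<forall>x0\<in>X0. \<forall>i\<in>{1..p}. \<exists>\<xi>>0. \<forall>z\<in>XVF i. \<forall>z'\<in>XVF i.
                    T x0 z \<ge> 0 \<and> T z z' \<ge> 0 \<longrightarrow> V i x0 z' \<le> V i x0 z - \<xi>"
  shows "\<exists>\<kappa> :: real ^ 'n \<Rightarrow> (real ^ 'm) set.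
           (\<forall>x\<in>X. \<kappa> x \<subseteq> U \<and> \<kappa> x \<noteq> {}) \<and>
           (\<forall>xs. is_trajectory X0 f \<kappa> xs \<longrightarrow>
                 visits_finitely_often xs (\<Union>i\<in>{1..p}. XVF i))"
proof (intro exI conjI allI impI)
  let ?\<kappa> = "progress_controller U f T"
  show "\<forall>x\<in>X. ?\<kappa> x \<subseteq> U \<and> ?\<kappa> x \<noteq> {}"
    using cond_i unfolding progress_controller_def by auto
  fix xs assume traj: "is_trajectory X0 f ?\<kappa> xs"
  have x0: "xs 0 \<in> X0" using traj unfolding is_trajectory_def by simp
  have in_X: "xs k \<in> X" for k
    using trajectory_in_invariant_set[OF traj X0_sub] f_maps
    unfolding progress_controller_def by blast
  note related = progress_controller_trajectory_related[OF traj X0_sub f_maps cond_ii]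
  \<comment> \<open>Time 0 is excluded because T (xs 0) (xs 0) \<ge> 0 is not assumed.\<close>
  have "finite ({k. xs k \<in> XVF i} - {0})" if i: "i \<in> {1..p}" for i
  proof -
    obtain \<xi> where "\<xi> > 0" and decrease: "\<forall>z\<in>XVF i. \<forall>z'\<in>XVF i.
        T (xs 0) z \<ge> 0 \<and> T z z' \<ge> 0 \<longrightarrow> V i (xs 0) z' \<le> V i (xs 0) z - \<xi>"
      using cond_iii x0 i by blast
    show ?thesis
      by (rule finite_if_uniformly_decreasing[where g = "\<lambda>k. V i (xs 0) (xs k)", OF \<open>\<xi> > 0\<close>])
        (use V_nonneg i in_X decrease related in auto)
  qed
  then show "visits_finitely_often xs (\<Union>i\<in>{1..p}. XVF i)"
    unfolding visits_finitely_often_def by (auto simp: Collect_ex_eq)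
qed

end
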